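(* Let $d_1,d_2,d_3\in\mathbb{R}^2$ be unit vectors with $d_2=R(-\theta_{12})d_1$, $d_3=R(\theta_{13})d_1$, where $0<\theta_{12},\theta_{13}<\pi$ and $\theta_{12}+\theta_{13}\ge\pi$. Let $s\in\mathbb{C}$ with $\mathrm{Re}(s)>0$. Suppose $X^1,X^2,X^3:[0,\infty)\to\mathbb{C}^2$ are bounded smooth functions satisfying on $(0,\infty)$ $$sX^1\cdot d_1^\perp=X^1_{\sigma\sigma}\cdot d_1^\perp,\quad d_1\cdot X^1_{\sigma\sigma}=0,$$ $$sX^j\cdot d_j^\perp=-X^j_{\sigma\sigma\sigma\sigma}\cdot d_j^\perp,\quad d_j\cdot X^j_{\sigma\sigma}=0\qquad(j=2,3),$$ and the eight scalar conditions at $\sigma=0$: (i) $X^1(0)=X^2(0)=X^3(0)$; (ii) $d_1\cdot X^j_\sigma+d_j\cdot X^1_\sigma-(d_1\cdot d_j)(d_1\cdot X^1_\sigma+d_j\cdot X^j_\sigma)=0$ for $j=2,3$; (iii) $X^2_{\sigma\sigma}\cdot d_2^\perp=-X^3_{\sigma\sigma}\cdot d_3^\perp$; (iv) $X^2_{\sigma\sigma\sigma}\cdot d_2^\perp=X^3_{\sigma\sigma\sigma}\cdot d_3^\perp$. Then $X^1\equiv X^2\equiv X^3\equiv0$.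
   Context: $R(\varphi)$ denotes counterclockwise rotation by $\varphi$ and $d^\perp=R(\pi/2)d$; the dot product on $\mathbb{C}^2$ is bilinear. This is the Laplace-transformed (zero initial data) linearization, around straight rays with directions $d_1$ (grain boundary) and $d_2,d_3$ (exterior surface branches) meeting at a triple junction at $\sigma=0$, of the partial differential algebraic system $X^1_t\cdot\vec n-\kappa=0$, $X^j_t\cdot\vec n+\kappa_{ss}=0$ ($j=2,3$), $X^i_\sigma\cdot X^i_{\sigma\sigma}=0$ ($i=1,2,3$), with the linearized common-point, Young angle, curvature-continuity and mass-flux-balance junction conditions (no artificial tangential conditions). *)

theory Defs
  imports "HOL-Analysis.Analysis"
begin

definition rot :: "real \<Rightarrow> real \<times> real \<Rightarrow> real \<times> real" where
  "rot phi v = (cos phi * fst v - sin phi * snd v, sin phi * fst v + cos phi * snd v)"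

definition perp :: "real \<times> real \<Rightarrow> real \<times> real" where
  "perp d = rot (pi/2) d"

definition cvec :: "real \<times> real \<Rightarrow> complex \<times> complex" where
  "cvec v = (complex_of_real (fst v), complex_of_real (snd v))"

text \<open>Bilinear (non-Hermitian) dot product on C^2.\<close>
definition cdot :: "complex \<times> complex \<Rightarrow> complex \<times> complex \<Rightarrow> complex" where
  "cdot u v = fst u * fst v + snd u * snd v"

text \<open>With S = {0..} this
  expresses C-infinity smoothness on the closed half-line (one-sided at 0).\<close>
definition higher_derivs_on :: "(nat \<Rightarrow> real \<Rightarrow> 'a::real_normed_vector) \<Rightarrow> real set \<Rightarrow> bool" where
  "higher_derivs_on D S \<longleftrightarrow>
     (\<forall>k. \<forall>t\<in>S. (D k has_vector_derivative D (Suc k) t) (at t within S))"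

end

theory Submission
  imports Defs
begin

(* Project each branch onto its direction d and its normal perp d. The tangential parts solve
   y'' = 0 and are bounded, hence constant. The normal parts solve y'' = s y on the grain boundary
   and y'''' = -s y on the surface branches; boundedness kills every growing exponential, so at the
   junction n1' = -mu n1 with mu^2 = s, and (D + a)(D + c) n = 0 on each surface branch, where
   a, c are the roots of z^4 = -s in the right half plane. With vanishing tangential derivatives,
   Young's condition equalises the three normal slopes, and the curvature and flux conditions then
   force the normal displacements of both surface branches at the junction to be (a + c) times
   that of the grain boundary. This is a 2x2 linear system for the junction point whose
   determinant (a + c)(sin th12 + sin th13) - sin (th12 + th13) has positive real part because
   th12 + th13 >= pi. So the junction point is 0, and then every branch vanishes identically. *)

section \<open>Linear ODEs on the half-line\<close>

definition has_halfline_derivative :: "(real \<Rightarrow> complex) \<Rightarrow> (real \<Rightarrow> complex) \<Rightarrow> bool" where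
  "has_halfline_derivative y y' \<longleftrightarrow>
     (\<forall>t\<ge>0. (y has_vector_derivative y' t) (at t within {0..}))"

lemma higher_derivs_on_halfline:
  "higher_derivs_on b {0..} \<Longrightarrow> has_halfline_derivative (b k) (b (Suc k))"
  by (simp add: higher_derivs_on_def has_halfline_derivative_def)

lemma has_halfline_derivative_cong:
  "has_halfline_derivative y y' \<Longrightarrow> (\<And>t. t \<ge> 0 \<Longrightarrow> y' t = y'' t) \<Longrightarrow>
   has_halfline_derivative y y''"
  by (simp add: has_halfline_derivative_def)

lemma has_halfline_derivative_add:
  "has_halfline_derivative f f' \<Longrightarrow> has_halfline_derivative g g' \<Longrightarrow>
   has_halfline_derivative (\<lambda>t. f t + g t) (\<lambda>t. f' t + g' t)"
  unfolding has_halfline_derivative_def by (auto intro!: has_vector_derivative_add)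

lemma has_halfline_derivative_diff:
  "has_halfline_derivative f f' \<Longrightarrow> has_halfline_derivative g g' \<Longrightarrow>
   has_halfline_derivative (\<lambda>t. f t - g t) (\<lambda>t. f' t - g' t)"
  unfolding has_halfline_derivative_def by (auto intro!: has_vector_derivative_diff)

lemma has_halfline_derivative_mult_left:
  "has_halfline_derivative f f' \<Longrightarrow> has_halfline_derivative (\<lambda>t. x * f t) (\<lambda>t. x * f' t)"
  unfolding has_halfline_derivative_def by (auto intro!: has_vector_derivative_mult_right)

lemma has_halfline_derivative_exp:
  "has_halfline_derivative (\<lambda>t. exp (t *\<^sub>R c)) (\<lambda>t. c * exp (t *\<^sub>R c))"
  unfolding has_halfline_derivative_def
  by (auto intro: exp_scaleR_has_vector_derivative_right[THEN has_vector_derivative_eq_rhs])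

lemma has_halfline_derivative_continuous_on:
  "has_halfline_derivative y y' \<Longrightarrow> continuous_on {0..} y"
  unfolding has_halfline_derivative_def by (rule continuous_on_vector_derivative) auto

lemma halfline_derivative_zero_constant:
  assumes "has_halfline_derivative y (\<lambda>_. 0)" "t \<ge> 0"
  shows "y t = y 0"
proof -
  obtain k where "\<And>x. x \<in> {0..} \<Longrightarrow> y x = k"
    using assms(1) has_vector_derivative_zero_constant[OF convex_real_interval(1), where f=y]
    unfolding has_halfline_derivative_def by auto
  then show ?thesis using assms(2) by simp
qed

lemma halfline_linear_ode_solution:
  assumes "has_halfline_derivative y (\<lambda>t. c * y t)" "t \<ge> 0"
  shows "y t = y 0 * exp (t *\<^sub>R c)"
proof -
  have "has_halfline_derivative (\<lambda>t. y t * exp (t *\<^sub>R (- c))) (\<lambda>_. 0)"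
    unfolding has_halfline_derivative_def
  proof (intro allI impI)
    fix t :: real assume "t \<ge> 0"
    then have "(y has_vector_derivative c * y t) (at t within {0..})"
      using assms(1) by (simp add: has_halfline_derivative_def)
    from has_vector_derivative_mult[OF this exp_scaleR_has_vector_derivative_right[where A="- c"]]
    show "((\<lambda>t. y t * exp (t *\<^sub>R (- c))) has_vector_derivative 0) (at t within {0..})"
      by (simp add: algebra_simps)
  qed
  from halfline_derivative_zero_constant[OF this assms(2)]
  show ?thesis by (simp add: exp_minus field_simps)
qed

lemma halfline_affine_solution:
  assumes "has_halfline_derivative y (\<lambda>_. c)" "t \<ge> 0"
  shows "y t = y 0 + t *\<^sub>R c"
proof -
  have "has_halfline_derivative (\<lambda>t. y t - t *\<^sub>R c) (\<lambda>_. 0)"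
    using assms(1) unfolding has_halfline_derivative_def
    by (auto intro!: derivative_eq_intros)
  from halfline_derivative_zero_constant[OF this assms(2)] show ?thesis by (simp add: algebra_simps)
qed

lemma halfline_eq_by_continuity:
  fixes f g :: "real \<Rightarrow> 'a::real_normed_vector"
  assumes "continuous_on {0..} f" "continuous_on {0..} g" "\<And>t. t > 0 \<Longrightarrow> f t = g t" "t \<ge> 0"
  shows "f t = g t"
proof -
  have "closed {x \<in> {0..}. f x - g x = 0}"
    using continuous_closedin_preimage_constant[OF continuous_on_diff[OF assms(1,2)]]
      closedin_closed_trans closed_atLeast by blast
  moreover have "{0<..} \<subseteq> {x \<in> {0..}. f x - g x = 0}" using assms(3) by auto
  ultimately have "closure {0<..} \<subseteq> {x \<in> {0..}. f x - g x = 0}" by (rule closure_minimal[rotated])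
  then show ?thesis using assms(4) by auto
qed

lemma higher_derivs_on_halfline_continuous_on:
  fixes b :: "nat \<Rightarrow> real \<Rightarrow> complex"
  shows "higher_derivs_on b {0..} \<Longrightarrow> continuous_on {0..} (b k)"
  by (rule has_halfline_derivative_continuous_on[OF higher_derivs_on_halfline])

lemma higher_derivs_on_halfline_eq_extend:
  fixes b :: "nat \<Rightarrow> real \<Rightarrow> complex"
  assumes "higher_derivs_on b {0..}" "\<And>t. t > 0 \<Longrightarrow> b i t = \<kappa> * b j t" "t \<ge> 0"
  shows "b i t = \<kappa> * b j t"
  using assms(2,3)
  by (rule halfline_eq_by_continuity[OF higher_derivs_on_halfline_continuous_on[OF assms(1)]
        continuous_on_mult_left[OF higher_derivs_on_halfline_continuous_on[OF assms(1)]]])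

lemma halfline_second_order_ode_solution:
  assumes y': "has_halfline_derivative y y'" and y'': "has_halfline_derivative y' y''"
    and ode: "\<And>t. t \<ge> 0 \<Longrightarrow> y'' t = (\<alpha> + \<beta>) * y' t - \<alpha> * \<beta> * y t"
    and "\<alpha> \<noteq> \<beta>" "t \<ge> 0"
  shows "(\<alpha> - \<beta>) * y t = (y' 0 - \<beta> * y 0) * exp (t *\<^sub>R \<alpha>) + (\<alpha> * y 0 - y' 0) * exp (t *\<^sub>R \<beta>)"
proof -
  define u where "u t = y' t - \<beta> * y t" for t
  have "has_halfline_derivative u (\<lambda>t. y'' t - \<beta> * y' t)"
    unfolding u_def by (intro has_halfline_derivative_diff has_halfline_derivative_mult_left y' y'')
  then have "has_halfline_derivative u (\<lambda>t. \<alpha> * u t)"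
    by (rule has_halfline_derivative_cong) (simp add: ode u_def algebra_simps)
  then have u: "u t = u 0 * exp (t *\<^sub>R \<alpha>)" if "t \<ge> 0" for t
    using halfline_linear_ode_solution that by blast
  define w where "w t = (\<alpha> - \<beta>) * y t - u 0 * exp (t *\<^sub>R \<alpha>)" for t
  have "has_halfline_derivative w (\<lambda>t. (\<alpha> - \<beta>) * y' t - u 0 * (\<alpha> * exp (t *\<^sub>R \<alpha>)))"
    unfolding w_def
    by (intro has_halfline_derivative_diff has_halfline_derivative_mult_left has_halfline_derivative_exp y')
  then have "has_halfline_derivative w (\<lambda>t. \<beta> * w t)"
  proof (rule has_halfline_derivative_cong)
    fix t :: real assume "t \<ge> 0"
    then have "y' t = \<beta> * y t + u 0 * exp (t *\<^sub>R \<alpha>)"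
      using u[of t] unfolding u_def by (simp add: diff_eq_eq add.commute)
    then show "(\<alpha> - \<beta>) * y' t - u 0 * (\<alpha> * exp (t *\<^sub>R \<alpha>)) = \<beta> * w t"
      by (simp add: w_def algebra_simps)
  qed
  from halfline_linear_ode_solution[OF this \<open>t \<ge> 0\<close>] show ?thesis
    by (simp add: w_def u_def algebra_simps)
qed

section \<open>Bounded exponential sums\<close>

lemma norm_exp_scaleR_le_1: "Re c \<le> 0 \<Longrightarrow> t \<ge> 0 \<Longrightarrow> norm (exp (t *\<^sub>R c)) \<le> 1"
  by (simp add: mult_nonneg_nonpos)

lemma bounded_growing_exp_coeff_eq_0:
  assumes "Re c > 0" and bound: "\<And>t. t \<ge> 0 \<Longrightarrow> norm (A * exp (t *\<^sub>R c)) \<le> M"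
  shows "A = 0"
proof (rule ccontr)
  assume "A \<noteq> 0"
  define t where "t = (\<bar>M\<bar> / norm A + 1) / Re c"
  have "t \<ge> 0" using \<open>Re c > 0\<close> by (simp add: t_def)
  have "\<bar>M\<bar> / norm A < 1 + t * Re c" using \<open>Re c > 0\<close> by (simp add: t_def)
  also have "\<dots> \<le> exp (t * Re c)" by (rule exp_ge_add_one_self)
  finally have "\<bar>M\<bar> < norm (A * exp (t *\<^sub>R c))"
    using \<open>A \<noteq> 0\<close> by (simp add: norm_mult field_simps)
  with bound[OF \<open>t \<ge> 0\<close>] show False by linarith
qed

lemma exp_scaleR_neq_at_inverse_dist:
  fixes a b :: complex
  assumes "a \<noteq> b"
  shows "exp ((1 / norm (a - b)) *\<^sub>R a) \<noteq> exp ((1 / norm (a - b)) *\<^sub>R b)"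
proof
  define z where "z = (1 / norm (a - b)) *\<^sub>R (a - b)"
  assume "exp ((1 / norm (a - b)) *\<^sub>R a) = exp ((1 / norm (a - b)) *\<^sub>R b)"
  then have "exp z = 1" unfolding z_def scaleR_diff_right exp_diff by simp
  then obtain n :: int where "Re z = 0" "Im z = of_int (2 * n) * pi" by (auto simp: exp_eq_1)
  moreover have "norm z = 1" using assms by (simp add: z_def)
  ultimately have "\<bar>real_of_int n\<bar> * (2 * pi) = 1" using cmod_eq_Im[of z] by (simp add: abs_mult)
  moreover have "n = 0 \<or> 1 * (2 * pi) \<le> \<bar>real_of_int n\<bar> * (2 * pi)"
    by (cases "n = 0") (auto intro!: mult_right_mono)
  ultimately show False using pi_gt3 by auto
qed

lemma bounded_growing_exp_sum_coeffs_eq_0: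
  assumes "Re a > 0" "Re b > 0" "a \<noteq> b"
    and bound: "\<And>t. t \<ge> 0 \<Longrightarrow> norm (A * exp (t *\<^sub>R a) + B * exp (t *\<^sub>R b)) \<le> M"
  shows "A = 0" "B = 0"
proof -
  define \<tau> where "\<tau> = 1 / norm (a - b)"
  have "\<tau> \<ge> 0" by (simp add: \<tau>_def)
  \<comment> \<open>The shifted combination f(t + \<tau>) - exp(\<tau> b) f(t) has no b-component left.\<close>
  have "A * (exp (\<tau> *\<^sub>R a) - exp (\<tau> *\<^sub>R b)) = 0"
  proof (rule bounded_growing_exp_coeff_eq_0[OF \<open>Re a > 0\<close>])
    fix t :: real assume "t \<ge> 0"
    have "A * (exp (\<tau> *\<^sub>R a) - exp (\<tau> *\<^sub>R b)) * exp (t *\<^sub>R a) =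
        (A * exp ((t + \<tau>) *\<^sub>R a) + B * exp ((t + \<tau>) *\<^sub>R b))
        - exp (\<tau> *\<^sub>R b) * (A * exp (t *\<^sub>R a) + B * exp (t *\<^sub>R b))"
      by (simp add: scaleR_add_left exp_add algebra_simps)
    also have "norm \<dots> \<le> M + norm (exp (\<tau> *\<^sub>R b)) * M"
      using bound[of "t + \<tau>"] bound[of t] \<open>t \<ge> 0\<close> \<open>\<tau> \<ge> 0\<close>
      by (intro order_trans[OF norm_triangle_ineq4] add_mono)
        (auto simp: norm_mult intro: mult_left_mono)
    finally show "norm (A * (exp (\<tau> *\<^sub>R a) - exp (\<tau> *\<^sub>R b)) * exp (t *\<^sub>R a))
      \<le> M + norm (exp (\<tau> *\<^sub>R b)) * M" .
  qed
  then show "A = 0" using exp_scaleR_neq_at_inverse_dist[OF \<open>a \<noteq> b\<close>] by (simp add: \<tau>_def)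
  with bound show "B = 0" by (intro bounded_growing_exp_coeff_eq_0[OF \<open>Re b > 0\<close>]) simp
qed

section \<open>Bounded solutions of the branch equations\<close>

lemma higher_derivs_on_halfline_0_1:
  assumes "higher_derivs_on b {0..}"
  shows "has_halfline_derivative (b 0) (b 1)" "has_halfline_derivative (b 1) (b 2)"
  using higher_derivs_on_halfline[OF assms, of 0] higher_derivs_on_halfline[OF assms, of 1]
  by (simp_all add: numeral_2_eq_2)

lemma bounded_halfline_solution_deriv2_eq_0:
  fixes b :: "nat \<Rightarrow> real \<Rightarrow> complex"
  assumes b: "higher_derivs_on b {0..}" and "bounded (b 0 ` {0..})"
    and ode: "\<And>t. t \<ge> 0 \<Longrightarrow> b 2 t = 0"
  shows "b 1 0 = 0" and "t \<ge> 0 \<Longrightarrow> b 0 t = b 0 0"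
proof -
  obtain M where M: "\<And>t. t \<ge> 0 \<Longrightarrow> norm (b 0 t) \<le> M"
    using \<open>bounded (b 0 ` {0..})\<close> by (auto simp: bounded_iff)
  note d = higher_derivs_on_halfline_0_1[OF b]
  have "has_halfline_derivative (b 1) (\<lambda>_. 0)"
    using d(2) by (rule has_halfline_derivative_cong) (rule ode)
  then have "has_halfline_derivative (b 0) (\<lambda>_. b 1 0)"
    using d(1) by (auto intro: has_halfline_derivative_cong halfline_derivative_zero_constant)
  then have affine: "b 0 t = b 0 0 + t *\<^sub>R b 1 0" if "t \<ge> 0" for t
    using halfline_affine_solution that by blast
  show "b 1 0 = 0"
  proof (rule ccontr)
    assume "b 1 0 \<noteq> 0"
    define t where "t = (2 * \<bar>M\<bar> + 1) / norm (b 1 0)"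
    have "t \<ge> 0" by (simp add: t_def)
    have "2 * \<bar>M\<bar> + 1 = norm (t *\<^sub>R b 1 0)" using \<open>b 1 0 \<noteq> 0\<close> by (simp add: t_def)
    also have "\<dots> \<le> norm (b 0 t) + norm (b 0 0)"
      using affine[OF \<open>t \<ge> 0\<close>] norm_triangle_ineq4[of "b 0 t" "b 0 0"] by simp
    also have "\<dots> \<le> 2 * M" using M[OF \<open>t \<ge> 0\<close>] M[of 0] by simp
    finally show False by linarith
  qed
  then show "b 0 t = b 0 0" if "t \<ge> 0" using affine[OF that] by simp
qed

lemma bounded_halfline_solution_deriv2_eq_sq:
  fixes b :: "nat \<Rightarrow> real \<Rightarrow> complex"
  assumes b: "higher_derivs_on b {0..}" and "bounded (b 0 ` {0..})"
    and "Re \<mu> > 0" and ode: "\<And>t. t \<ge> 0 \<Longrightarrow> b 2 t = \<mu>\<^sup>2 * b 0 t"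
  shows "b 1 0 = - \<mu> * b 0 0" and "t \<ge> 0 \<Longrightarrow> b 0 t = b 0 0 * exp (t *\<^sub>R (- \<mu>))"
proof -
  obtain M where M: "\<And>t. t \<ge> 0 \<Longrightarrow> norm (b 0 t) \<le> M"
    using \<open>bounded (b 0 ` {0..})\<close> by (auto simp: bounded_iff)
  have "\<mu> \<noteq> - \<mu>" using \<open>Re \<mu> > 0\<close> by (auto simp: complex_eq_iff)
  note d = higher_derivs_on_halfline_0_1[OF b]
  have sol: "2 * \<mu> * b 0 t = (b 1 0 + \<mu> * b 0 0) * exp (t *\<^sub>R \<mu>)
      + (\<mu> * b 0 0 - b 1 0) * exp (t *\<^sub>R (- \<mu>))" if "t \<ge> 0" for t
    using halfline_second_order_ode_solution[OF d(1,2) _ \<open>\<mu> \<noteq> - \<mu>\<close> that]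
    by (simp add: ode power2_eq_square)
  have "b 1 0 + \<mu> * b 0 0 = 0"
  proof (rule bounded_growing_exp_coeff_eq_0[OF \<open>Re \<mu> > 0\<close>])
    fix t :: real assume "t \<ge> 0"
    have "(b 1 0 + \<mu> * b 0 0) * exp (t *\<^sub>R \<mu>)
        = 2 * \<mu> * b 0 t - (\<mu> * b 0 0 - b 1 0) * exp (t *\<^sub>R (- \<mu>))"
      using sol[OF \<open>t \<ge> 0\<close>] by (simp only: eq_diff_eq)
    then have "norm ((b 1 0 + \<mu> * b 0 0) * exp (t *\<^sub>R \<mu>))
        \<le> norm (2 * \<mu> * b 0 t) + norm ((\<mu> * b 0 0 - b 1 0) * exp (t *\<^sub>R (- \<mu>)))"
      by (simp only: norm_triangle_ineq4)
    also have "\<dots> \<le> norm (2 * \<mu>) * M + norm (\<mu> * b 0 0 - b 1 0)"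
      using M[OF \<open>t \<ge> 0\<close>] norm_exp_scaleR_le_1[of "- \<mu>" t] \<open>Re \<mu> > 0\<close> \<open>t \<ge> 0\<close>
      by (intro add_mono) (auto simp: norm_mult intro: mult_left_mono mult_left_le)
    finally show "norm ((b 1 0 + \<mu> * b 0 0) * exp (t *\<^sub>R \<mu>))
        \<le> norm (2 * \<mu>) * M + norm (\<mu> * b 0 0 - b 1 0)" .
  qed
  then show slope: "b 1 0 = - \<mu> * b 0 0" by (simp add: add_eq_0_iff)
  assume "t \<ge> 0"
  have "2 * \<mu> * b 0 t = 2 * \<mu> * (b 0 0 * exp (t *\<^sub>R (- \<mu>)))"
    using sol[OF \<open>t \<ge> 0\<close>] unfolding slope by (simp add: algebra_simps)
  then show "b 0 t = b 0 0 * exp (t *\<^sub>R (- \<mu>))" using \<open>\<mu> \<noteq> - \<mu>\<close> by simp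
qed

lemma Re_pos_add_neq_0: "Re x > 0 \<Longrightarrow> Re y > 0 \<Longrightarrow> x + y \<noteq> 0"
  by (metis add_pos_pos plus_complex.sel(1) zero_complex.sel(1) order_less_irrefl)

lemma bounded_halfline_forced_second_order_coeffs_eq_0:
  assumes y': "has_halfline_derivative y y'" and y'': "has_halfline_derivative y' y''"
    and "Re a > 0" "Re c > 0" "a \<noteq> c"
    and bound: "\<And>t. t \<ge> 0 \<Longrightarrow> norm (y t) \<le> M"
    and ode: "\<And>t. t \<ge> 0 \<Longrightarrow>
      y'' t + (a + c) * y' t + a * c * y t = A * exp (t *\<^sub>R a) + C * exp (t *\<^sub>R c)"
  shows "A = 0" "C = 0"
proof -
  define Ka where "Ka = A / ((a + a) * (a + c))"
  define Kc where "Kc = C / ((c + a) * (c + c))"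
  have nz: "a + a \<noteq> 0" "a + c \<noteq> 0" "c + a \<noteq> 0" "c + c \<noteq> 0"
    using Re_pos_add_neq_0 \<open>Re a > 0\<close> \<open>Re c > 0\<close> by blast+
  \<comment> \<open>Subtracting the particular solution leaves a solution of the decaying equation.\<close>
  define q where "q t = y t - Ka * exp (t *\<^sub>R a) - Kc * exp (t *\<^sub>R c)" for t
  define q' where "q' t = y' t - Ka * (a * exp (t *\<^sub>R a)) - Kc * (c * exp (t *\<^sub>R c))" for t
  define q'' where "q'' t = y'' t - Ka * (a * (a * exp (t *\<^sub>R a))) - Kc * (c * (c * exp (t *\<^sub>R c)))"
    for t
  have q: "has_halfline_derivative q q'" "has_halfline_derivative q' q''"
    unfolding q_def[abs_def] q'_def[abs_def] q''_def[abs_def]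
    by (intro has_halfline_derivative_diff has_halfline_derivative_mult_left
          has_halfline_derivative_exp y' y'')+
  have "q'' t = (- a + - c) * q' t - (- a) * (- c) * q t" if "t \<ge> 0" for t
  proof -
    have "q'' t - ((- a + - c) * q' t - (- a) * (- c) * q t)
        = (y'' t + (a + c) * y' t + a * c * y t)
          - Ka * ((a + a) * (a + c)) * exp (t *\<^sub>R a) - Kc * ((c + a) * (c + c)) * exp (t *\<^sub>R c)"
      by (simp add: q_def q'_def q''_def algebra_simps)
    also have "\<dots> = 0" using ode[OF that] nz by (simp add: Ka_def Kc_def)
    finally show ?thesis by simp
  qed
  from halfline_second_order_ode_solution[OF q this] \<open>a \<noteq> c\<close>
  have q_sol: "(c - a) * q t = (q' 0 + c * q 0) * exp (t *\<^sub>R (- a))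
      + (- a * q 0 - q' 0) * exp (t *\<^sub>R (- c))" if "t \<ge> 0" for t
    using that by (simp add: algebra_simps)
  define N where "N = (norm (q' 0 + c * q 0) + norm (- a * q 0 - q' 0)) / norm (c - a)"
  have "norm (Ka * exp (t *\<^sub>R a) + Kc * exp (t *\<^sub>R c)) \<le> M + N" if "t \<ge> 0" for t
  proof -
    have "norm ((c - a) * q t) \<le> norm (q' 0 + c * q 0) + norm (- a * q 0 - q' 0)"
      unfolding q_sol[OF that]
      using norm_exp_scaleR_le_1[of "- a" t] norm_exp_scaleR_le_1[of "- c" t]
        \<open>Re a > 0\<close> \<open>Re c > 0\<close> that
      by (intro order_trans[OF norm_triangle_ineq] add_mono)
        (auto simp: norm_mult intro: mult_left_le)
    then have "norm (q t) \<le> N"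
      using \<open>a \<noteq> c\<close> by (simp add: N_def norm_mult pos_le_divide_eq mult.commute)
    moreover have "Ka * exp (t *\<^sub>R a) + Kc * exp (t *\<^sub>R c) = y t - q t" by (simp add: q_def)
    ultimately show ?thesis using bound[OF that] norm_triangle_ineq4[of "y t" "q t"] by simp
  qed
  from bounded_growing_exp_sum_coeffs_eq_0[OF \<open>Re a > 0\<close> \<open>Re c > 0\<close> \<open>a \<noteq> c\<close> this]
  show "A = 0" "C = 0" using nz by (simp_all add: Ka_def Kc_def)
qed

lemma bounded_halfline_solution_deriv4:
  fixes b :: "nat \<Rightarrow> real \<Rightarrow> complex"
  assumes b: "higher_derivs_on b {0..}" and "bounded (b 0 ` {0..})"
    and "Re a > 0" "Re c > 0" "a\<^sup>2 + c\<^sup>2 = 0"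
    and ode: "\<And>t. t \<ge> 0 \<Longrightarrow> b 4 t = - (a * c)\<^sup>2 * b 0 t"
  shows "b 2 0 + (a + c) * b 1 0 + a * c * b 0 0 = 0"
    and "b 3 0 + (a + c) * b 2 0 + a * c * b 1 0 = 0"
    and "b 0 0 = 0 \<Longrightarrow> b 1 0 = 0 \<Longrightarrow> t \<ge> 0 \<Longrightarrow> b 0 t = 0"
proof -
  obtain M where M: "\<And>t. t \<ge> 0 \<Longrightarrow> norm (b 0 t) \<le> M"
    using \<open>bounded (b 0 ` {0..})\<close> by (auto simp: bounded_iff)
  have "a \<noteq> c" using \<open>Re a > 0\<close> \<open>a\<^sup>2 + c\<^sup>2 = 0\<close> by (auto simp: power2_eq_square)
  note d = higher_derivs_on_halfline_0_1[OF b]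
  \<comment> \<open>v k is the k-th derivative of (D + a)(D + c) b. Since a^2 + c^2 = 0 we have
    D^4 + (a c)^2 = (D - a)(D - c)(D + a)(D + c), so v solves (D - a)(D - c) v = 0.\<close>
  define v where "v k t = b (Suc (Suc k)) t + (a + c) * b (Suc k) t + a * c * b k t" for k t
  have "has_halfline_derivative (v k) (v (Suc k))" for k
    unfolding v_def[abs_def]
    by (intro has_halfline_derivative_add has_halfline_derivative_mult_left
        higher_derivs_on_halfline[OF b])
  then have v: "has_halfline_derivative (v 0) (v 1)" "has_halfline_derivative (v 1) (v 2)"
    by (simp_all add: numeral_2_eq_2)
  have v_ode: "v 2 t = (a + c) * v 1 t - a * c * v 0 t" if "t \<ge> 0" for t
  proof -
    have "v 2 t - ((a + c) * v 1 t - a * c * v 0 t)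
        = b 4 t + (a * c)\<^sup>2 * b 0 t - (a\<^sup>2 + c\<^sup>2) * b 2 t"
      by (simp add: v_def eval_nat_numeral power2_eq_square algebra_simps)
    also have "\<dots> = 0" using ode[OF that] \<open>a\<^sup>2 + c\<^sup>2 = 0\<close> by simp
    finally show ?thesis by simp
  qed
  define A where "A = (v 1 0 - c * v 0 0) / (a - c)"
  define C where "C = (a * v 0 0 - v 1 0) / (a - c)"
  have v0_sol: "v 0 t = A * exp (t *\<^sub>R a) + C * exp (t *\<^sub>R c)" if "t \<ge> 0" for t
  proof -
    have "v 0 t = ((a - c) * v 0 t) / (a - c)" using \<open>a \<noteq> c\<close> by simp
    also have "(a - c) * v 0 t = (v 1 0 - c * v 0 0) * exp (t *\<^sub>R a) + (a * v 0 0 - v 1 0) * exp (t *\<^sub>R c)"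
      using halfline_second_order_ode_solution[OF v v_ode \<open>a \<noteq> c\<close> that] by simp
    finally show ?thesis by (simp add: A_def C_def add_divide_distrib)
  qed
  have "b 2 t + (a + c) * b 1 t + a * c * b 0 t = A * exp (t *\<^sub>R a) + C * exp (t *\<^sub>R c)"
    if "t \<ge> 0" for t
    using v0_sol[OF that] by (simp add: v_def numeral_2_eq_2)
  from bounded_halfline_forced_second_order_coeffs_eq_0[OF d(1,2) \<open>Re a > 0\<close> \<open>Re c > 0\<close> \<open>a \<noteq> c\<close> M this]
  have "(v 1 0 - c * v 0 0) / (a - c) = 0" "(a * v 0 0 - v 1 0) / (a - c) = 0"
    by (simp_all add: A_def C_def)
  then have v0: "v 0 0 = 0" and v1: "v 1 0 = 0" using \<open>a \<noteq> c\<close> by auto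
  then show "b 2 0 + (a + c) * b 1 0 + a * c * b 0 0 = 0"
    and "b 3 0 + (a + c) * b 2 0 + a * c * b 1 0 = 0" by (simp_all add: v_def eval_nat_numeral)
  assume "b 0 0 = 0" "b 1 0 = 0" "t \<ge> 0"
  have "b 2 t = (- a + - c) * b 1 t - (- a) * (- c) * b 0 t" if "t \<ge> 0" for t
  proof -
    have "b 2 t - ((- a + - c) * b 1 t - (- a) * (- c) * b 0 t) = v 0 t"
      by (simp add: v_def numeral_2_eq_2 algebra_simps)
    also have "\<dots> = 0" using v0_sol[OF that] v0 v1 by (simp add: A_def C_def)
    finally show ?thesis by simp
  qed
  from halfline_second_order_ode_solution[OF d(1,2) this _ \<open>t \<ge> 0\<close>] \<open>a \<noteq> c\<close>
  show "b 0 t = 0" using \<open>b 0 0 = 0\<close> \<open>b 1 0 = 0\<close> by simp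
qed

section \<open>Tangential and normal components\<close>

lemma cdot_commute: "cdot u v = cdot v u"
  by (simp add: cdot_def mult.commute)

lemma bounded_linear_cdot_left: "bounded_linear (\<lambda>x. cdot x w)"
  unfolding cdot_def
  by (intro bounded_linear_add bounded_linear_compose[OF bounded_linear_mult_left bounded_linear_fst]
      bounded_linear_compose[OF bounded_linear_mult_left bounded_linear_snd])

lemma higher_derivs_on_cdot:
  "higher_derivs_on D S \<Longrightarrow> higher_derivs_on (\<lambda>k t. cdot (D k t) w) S"
  unfolding higher_derivs_on_def
  by (auto intro: bounded_linear.has_vector_derivative[OF bounded_linear_cdot_left])

lemma bounded_cdot_image: "bounded (f ` S) \<Longrightarrow> bounded ((\<lambda>t. cdot (f t) w) ` S)"
  using bounded_linear_image[OF _ bounded_linear_cdot_left, of "f ` S" w] by (simp add: image_image)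

lemma cdot_rot_right:
  "cdot Y (cvec (rot \<phi> d)) = of_real (cos \<phi>) * cdot Y (cvec d) + of_real (sin \<phi>) * cdot Y (cvec (perp d))"
  by (simp add: cdot_def cvec_def rot_def perp_def algebra_simps)

lemma cdot_perp_rot_right:
  "cdot Y (cvec (perp (rot \<phi> d))) = of_real (cos \<phi>) * cdot Y (cvec (perp d)) - of_real (sin \<phi>) * cdot Y (cvec d)"
  by (simp add: cdot_def cvec_def rot_def perp_def algebra_simps)

lemma rot_eq_0_iff: "rot \<phi> d = 0 \<longleftrightarrow> d = 0"
proof
  assume "rot \<phi> d = 0"
  then have "rot (- \<phi>) (rot \<phi> d) = 0" by (simp add: rot_def zero_prod_def)
  moreover have "rot (- \<phi>) (rot \<phi> d) = d"
    by (simp add: rot_def prod_eq_iff power2_eq_square algebra_simps)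
      (simp flip: distrib_left)
  ultimately show "d = 0" by simp
qed (simp add: rot_def zero_prod_def)

lemma eq_0_if_cdot_tangent_normal_eq_0:
  assumes "d \<noteq> 0" "cdot Y (cvec d) = 0" "cdot Y (cvec (perp d)) = 0"
  shows "Y = 0"
proof -
  obtain x y where d: "d = (x, y)" by fastforce
  define r where "r = complex_of_real (x\<^sup>2 + y\<^sup>2)"
  have "x\<^sup>2 + y\<^sup>2 \<noteq> 0" using \<open>d \<noteq> 0\<close> by (simp add: d sum_power2_eq_zero_iff zero_prod_def)
  then have "r \<noteq> 0" by (simp only: r_def of_real_eq_0_iff not_False_eq_True)
  have "r * fst Y = x * cdot Y (cvec d) - y * cdot Y (cvec (perp d))"
    "r * snd Y = y * cdot Y (cvec d) + x * cdot Y (cvec (perp d))"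
    by (simp_all add: r_def d cdot_def cvec_def perp_def rot_def power2_eq_square algebra_simps)
  then show ?thesis using assms(2,3) \<open>r \<noteq> 0\<close> by (simp add: prod_eq_iff)
qed

lemma branch_tangential_component:
  fixes D :: "nat \<Rightarrow> real \<Rightarrow> complex \<times> complex"
  assumes D: "higher_derivs_on D {0..}" and "bounded (D 0 ` {0..})"
    and tangent: "\<And>t. t > 0 \<Longrightarrow> cdot (cvec d) (D 2 t) = 0"
  shows "cdot (D 1 0) (cvec d) = 0"
    and "t \<ge> 0 \<Longrightarrow> cdot (D 0 t) (cvec d) = cdot (D 0 0) (cvec d)"
proof -
  define b where "b k t = cdot (D k t) (cvec d)" for k t
  have b: "higher_derivs_on b {0..}" "bounded (b 0 ` {0..})"
    unfolding b_def using higher_derivs_on_cdot[OF D] bounded_cdot_image[OF \<open>bounded _\<close>] by auto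
  have "b 2 t = 0 * b 0 t" if "t > 0" for t
    using tangent[OF that] by (simp add: b_def cdot_commute)
  with b(1) have "b 2 t = 0 * b 0 t" if "t \<ge> 0" for t
    using that by (rule higher_derivs_on_halfline_eq_extend)
  then have ode: "b 2 t = 0" if "t \<ge> 0" for t using that by simp
  have "b 1 0 = 0" using b ode by (rule bounded_halfline_solution_deriv2_eq_0)
  then show "cdot (D 1 0) (cvec d) = 0" by (simp add: b_def)
  show "cdot (D 0 t) (cvec d) = cdot (D 0 0) (cvec d)" if "t \<ge> 0"
  proof -
    have "b 0 t = b 0 0" using b ode that by (rule bounded_halfline_solution_deriv2_eq_0)
    then show ?thesis by (simp add: b_def)
  qed
qed

lemma grain_boundary_branch:
  fixes D :: "nat \<Rightarrow> real \<Rightarrow> complex \<times> complex"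
  assumes D: "higher_derivs_on D {0..}" and "bounded (D 0 ` {0..})" and "d \<noteq> 0"
    and "Re \<mu> > 0" "\<mu>\<^sup>2 = s"
    and normal: "\<And>t. t > 0 \<Longrightarrow> s * cdot (D 0 t) (cvec (perp d)) = cdot (D 2 t) (cvec (perp d))"
    and tangent: "\<And>t. t > 0 \<Longrightarrow> cdot (cvec d) (D 2 t) = 0"
  shows "cdot (D 1 0) (cvec d) = 0"
    and "cdot (D 1 0) (cvec (perp d)) = - \<mu> * cdot (D 0 0) (cvec (perp d))"
    and "D 0 0 = 0 \<Longrightarrow> t \<ge> 0 \<Longrightarrow> D 0 t = 0"
proof -
  have tangential: "cdot (D 1 0) (cvec d) = 0"
    using D \<open>bounded _\<close> tangent by (rule branch_tangential_component)
  have tangential_const: "cdot (D 0 t) (cvec d) = cdot (D 0 0) (cvec d)" if "t \<ge> 0" for t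
    using D \<open>bounded _\<close> tangent that by (rule branch_tangential_component)
  define b where "b k t = cdot (D k t) (cvec (perp d))" for k t
  have b: "higher_derivs_on b {0..}" "bounded (b 0 ` {0..})"
    unfolding b_def using higher_derivs_on_cdot[OF D] bounded_cdot_image[OF \<open>bounded _\<close>] by auto
  have "b 2 t = \<mu>\<^sup>2 * b 0 t" if "t > 0" for t
    using normal[OF that] by (simp add: b_def \<open>\<mu>\<^sup>2 = s\<close>)
  with b(1) have ode: "b 2 t = \<mu>\<^sup>2 * b 0 t" if "t \<ge> 0" for t
    using that by (rule higher_derivs_on_halfline_eq_extend)
  have "b 1 0 = - \<mu> * b 0 0"
    using b \<open>Re \<mu> > 0\<close> ode by (rule bounded_halfline_solution_deriv2_eq_sq)
  then show "cdot (D 1 0) (cvec (perp d)) = - \<mu> * cdot (D 0 0) (cvec (perp d))"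
    by (simp add: b_def)
  show "cdot (D 1 0) (cvec d) = 0" using tangential .
  assume "D 0 0 = 0" "t \<ge> 0"
  have "b 0 t = b 0 0 * exp (t *\<^sub>R (- \<mu>))"
    using b \<open>Re \<mu> > 0\<close> ode \<open>t \<ge> 0\<close> by (rule bounded_halfline_solution_deriv2_eq_sq)
  then show "D 0 t = 0"
    using tangential_const[OF \<open>t \<ge> 0\<close>] \<open>D 0 0 = 0\<close>
    by (intro eq_0_if_cdot_tangent_normal_eq_0[OF \<open>d \<noteq> 0\<close>]) (simp_all add: b_def cdot_def)
qed

lemma surface_branch:
  fixes D :: "nat \<Rightarrow> real \<Rightarrow> complex \<times> complex"
  assumes D: "higher_derivs_on D {0..}" and "bounded (D 0 ` {0..})" and "d \<noteq> 0"
    and "Re a > 0" "Re c > 0" "a\<^sup>2 + c\<^sup>2 = 0" "(a * c)\<^sup>2 = s"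
    and normal: "\<And>t. t > 0 \<Longrightarrow> s * cdot (D 0 t) (cvec (perp d)) = - cdot (D 4 t) (cvec (perp d))"
    and tangent: "\<And>t. t > 0 \<Longrightarrow> cdot (cvec d) (D 2 t) = 0"
  shows "cdot (D 1 0) (cvec d) = 0"
    and "cdot (D 2 0) (cvec (perp d)) + (a + c) * cdot (D 1 0) (cvec (perp d))
      + a * c * cdot (D 0 0) (cvec (perp d)) = 0"
    and "cdot (D 3 0) (cvec (perp d)) + (a + c) * cdot (D 2 0) (cvec (perp d))
      + a * c * cdot (D 1 0) (cvec (perp d)) = 0"
    and "D 0 0 = 0 \<Longrightarrow> cdot (D 1 0) (cvec (perp d)) = 0 \<Longrightarrow> t \<ge> 0 \<Longrightarrow> D 0 t = 0"
proof -
  have tangential: "cdot (D 1 0) (cvec d) = 0"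
    using D \<open>bounded _\<close> tangent by (rule branch_tangential_component)
  have tangential_const: "cdot (D 0 t) (cvec d) = cdot (D 0 0) (cvec d)" if "t \<ge> 0" for t
    using D \<open>bounded _\<close> tangent that by (rule branch_tangential_component)
  define b where "b k t = cdot (D k t) (cvec (perp d))" for k t
  have b: "higher_derivs_on b {0..}" "bounded (b 0 ` {0..})"
    unfolding b_def using higher_derivs_on_cdot[OF D] bounded_cdot_image[OF \<open>bounded _\<close>] by auto
  have "b 4 t = - (a * c)\<^sup>2 * b 0 t" if "t > 0" for t
    using normal[OF that] by (simp add: b_def \<open>(a * c)\<^sup>2 = s\<close> equation_minus_iff)
  with b(1) have ode: "b 4 t = - (a * c)\<^sup>2 * b 0 t" if "t \<ge> 0" for t
    using that by (rule higher_derivs_on_halfline_eq_extend)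
  note normal_sol = bounded_halfline_solution_deriv4[OF b \<open>Re a > 0\<close> \<open>Re c > 0\<close> \<open>a\<^sup>2 + c\<^sup>2 = 0\<close>]
  show "cdot (D 1 0) (cvec d) = 0" using tangential .
  show "cdot (D 2 0) (cvec (perp d)) + (a + c) * cdot (D 1 0) (cvec (perp d))
      + a * c * cdot (D 0 0) (cvec (perp d)) = 0"
    and "cdot (D 3 0) (cvec (perp d)) + (a + c) * cdot (D 2 0) (cvec (perp d))
      + a * c * cdot (D 1 0) (cvec (perp d)) = 0"
    using normal_sol(1,2)[OF ode] by (simp_all add: b_def)
  assume "D 0 0 = 0" "cdot (D 1 0) (cvec (perp d)) = 0" "t \<ge> 0"
  have "b 0 0 = 0" "b 1 0 = 0"
    using \<open>D 0 0 = 0\<close> \<open>cdot (D 1 0) (cvec (perp d)) = 0\<close> by (simp_all add: b_def cdot_def)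
  with ode have "b 0 t = 0" using \<open>t \<ge> 0\<close> by (rule normal_sol(3))
  then show "D 0 t = 0"
    using tangential_const[OF \<open>t \<ge> 0\<close>] \<open>D 0 0 = 0\<close>
    by (intro eq_0_if_cdot_tangent_normal_eq_0[OF \<open>d \<noteq> 0\<close>]) (simp_all add: b_def cdot_def)
qed

section \<open>The junction\<close>

lemma Re_csqrt_pos: "Im z \<noteq> 0 \<or> Re z > 0 \<Longrightarrow> Re (csqrt z) > 0"
proof (rule ccontr)
  define w where "w = csqrt z"
  assume "Im z \<noteq> 0 \<or> Re z > 0" "\<not> Re (csqrt z) > 0"
  then have "Re w = 0" using Re_csqrt[of z] by (simp add: w_def)
  moreover have "z = w * w" by (simp add: w_def flip: power2_eq_square)
  ultimately have "Im z = 0" "Re z \<le> 0" by simp_all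
  with \<open>Im z \<noteq> 0 \<or> Re z > 0\<close> show False by simp
qed

text \<open>The conditions on a and c say that a, c, -a, -c are the four roots of z^4 = -s.\<close>

lemma exists_right_half_plane_fourth_roots:
  assumes "Re s > 0"
  obtains a c :: complex
  where "Re a > 0" "Re c > 0" "Re (a * c) > 0" "a\<^sup>2 + c\<^sup>2 = 0" "(a * c)\<^sup>2 = s"
proof -
  define \<mu> where "\<mu> = csqrt s"
  have "Re \<mu> > 0" unfolding \<mu>_def using assms by (intro Re_csqrt_pos) simp
  define a where "a = csqrt (\<i> * \<mu>)"
  have "Re a > 0" unfolding a_def using \<open>Re \<mu> > 0\<close> by (intro Re_csqrt_pos) simp
  have "2 * Re a * Im a = Im (a\<^sup>2)" by (simp add: power2_eq_square)
  also have "\<dots> = Re \<mu>" by (simp add: a_def)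
  finally have "Im a > 0"
    using \<open>Re a > 0\<close> \<open>Re \<mu> > 0\<close> mult_nonneg_nonpos[of "2 * Re a" "Im a"] by linarith
  have "a * (- \<i> * a) = - \<i> * a\<^sup>2" by (simp add: power2_eq_square)
  also have "\<dots> = \<mu>" by (simp add: a_def)
  finally have "a * (- \<i> * a) = \<mu>" .
  then show ?thesis
    using that[of a "- \<i> * a"] \<open>Re a > 0\<close> \<open>Im a > 0\<close> \<open>Re \<mu> > 0\<close>
    by (simp add: \<mu>_def power_mult_distrib)
qed

lemma young_condition_normal_slopes_eq:
  fixes Y Z :: "complex \<times> complex"
  assumes "sin \<phi> \<noteq> 0"
    and "cdot Y (cvec d) = 0" "cdot Z (cvec (rot \<phi> d)) = 0"
    and young: "cdot (cvec d) Z + cdot (cvec (rot \<phi> d)) Y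
      - cdot (cvec d) (cvec (rot \<phi> d)) * (cdot (cvec d) Y + cdot (cvec (rot \<phi> d)) Z) = 0"
  shows "cdot Z (cvec (perp (rot \<phi> d))) = cdot Y (cvec (perp d))"
proof -
  define C S where "C = complex_of_real (cos \<phi>)" and "S = complex_of_real (sin \<phi>)"
  have "S \<noteq> 0" "C * C + S * S = 1"
    using \<open>sin \<phi> \<noteq> 0\<close> by (simp_all add: C_def S_def flip: of_real_mult of_real_add)
  have Zt: "cdot Z (cvec d) = - S * cdot Y (cvec (perp d))"
    using young assms(2,3) by (simp add: cdot_rot_right cdot_commute C_def S_def eq_neg_iff_add_eq_0)
  have "S * (cdot Z (cvec (perp d)) - C * cdot Y (cvec (perp d))) = 0"
    using assms(3) Zt by (simp add: cdot_rot_right C_def S_def algebra_simps)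
  then have "cdot Z (cvec (perp d)) = C * cdot Y (cvec (perp d))" using \<open>S \<noteq> 0\<close> by simp
  then have "cdot Z (cvec (perp (rot \<phi> d))) = (C * C + S * S) * cdot Y (cvec (perp d))"
    using Zt by (simp add: cdot_perp_rot_right C_def S_def algebra_simps)
  then show ?thesis using \<open>C * C + S * S = 1\<close> by simp
qed

lemma junction_normal_system_trivial:
  fixes P Q \<sigma> :: complex
  assumes "0 < \<theta>\<^sub>2" "\<theta>\<^sub>2 < pi" "0 < \<theta>\<^sub>3" "\<theta>\<^sub>3 < pi" "pi \<le> \<theta>\<^sub>2 + \<theta>\<^sub>3" "Re \<sigma> > 0"
    and eq2: "of_real (cos \<theta>\<^sub>2) * Q + of_real (sin \<theta>\<^sub>2) * P = \<sigma> * Q"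
    and eq3: "of_real (cos \<theta>\<^sub>3) * Q - of_real (sin \<theta>\<^sub>3) * P = \<sigma> * Q"
  shows "P = 0" "Q = 0"
proof -
  have "sin \<theta>\<^sub>2 > 0" "sin \<theta>\<^sub>3 > 0" using assms(1-4) by (simp_all add: sin_gt_zero)
  have "sin (\<theta>\<^sub>2 + \<theta>\<^sub>3) \<le> 0" using assms(1-5) by (intro sin_le_zero) auto
  \<comment> \<open>Eliminating P leaves a factor whose real part is positive by the angle condition.\<close>
  define k where "k = \<sigma> * of_real (sin \<theta>\<^sub>2 + sin \<theta>\<^sub>3) - of_real (sin (\<theta>\<^sub>2 + \<theta>\<^sub>3))"
  have "Re \<sigma> * (sin \<theta>\<^sub>2 + sin \<theta>\<^sub>3) > 0"
    using \<open>Re \<sigma> > 0\<close> \<open>sin \<theta>\<^sub>2 > 0\<close> \<open>sin \<theta>\<^sub>3 > 0\<close> by (intro mult_pos_pos) auto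
  moreover have "Re k = Re \<sigma> * (sin \<theta>\<^sub>2 + sin \<theta>\<^sub>3) - sin (\<theta>\<^sub>2 + \<theta>\<^sub>3)" by (simp add: k_def)
  ultimately have "Re k > 0" using \<open>sin (\<theta>\<^sub>2 + \<theta>\<^sub>3) \<le> 0\<close> by linarith
  have "k * Q = of_real (sin \<theta>\<^sub>3) * (\<sigma> * Q - (of_real (cos \<theta>\<^sub>2) * Q + of_real (sin \<theta>\<^sub>2) * P))
      + of_real (sin \<theta>\<^sub>2) * (\<sigma> * Q - (of_real (cos \<theta>\<^sub>3) * Q - of_real (sin \<theta>\<^sub>3) * P))"
    by (simp add: k_def sin_add algebra_simps)
  then have "k * Q = 0" by (simp add: eq2 eq3)
  moreover have "k \<noteq> 0" using \<open>Re k > 0\<close> by auto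
  ultimately show "Q = 0" by simp
  with eq2 \<open>sin \<theta>\<^sub>2 > 0\<close> show "P = 0" by simp
qed

lemma surface_normals_at_junction:
  fixes y2 y3 :: "nat \<Rightarrow> complex"
  assumes "\<sigma> \<noteq> 0" "\<mu> \<noteq> 0" "y2 1 = - \<mu> * Q" "y3 1 = - \<mu> * Q"
    and "y2 2 + \<sigma> * y2 1 + \<mu> * y2 0 = 0" "y3 2 + \<sigma> * y3 1 + \<mu> * y3 0 = 0"
    and "y2 3 + \<sigma> * y2 2 + \<mu> * y2 1 = 0" "y3 3 + \<sigma> * y3 2 + \<mu> * y3 1 = 0"
    and "y2 2 = - y3 2" "y2 3 = y3 3"
  shows "y2 0 = \<sigma> * Q \<and> y3 0 = \<sigma> * Q"
proof -
  have "\<sigma> * (y2 2 - y3 2) = (y2 3 + \<sigma> * y2 2 + \<mu> * y2 1) - (y3 3 + \<sigma> * y3 2 + \<mu> * y3 1)"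
    using assms(3,4,10) by (simp add: algebra_simps)
  also have "\<dots> = 0" using assms(7,8) by simp
  finally have "y2 2 = 0" "y3 2 = 0" using assms(1,9) by simp_all
  then have "\<mu> * (y2 0 - \<sigma> * Q) = 0" "\<mu> * (y3 0 - \<sigma> * Q) = 0"
    using assms(3-6) by (simp_all add: algebra_simps)
  then show ?thesis using \<open>\<mu> \<noteq> 0\<close> by simp
qed

theorem mainTheorem6:
  fixes d1 d2 d3 :: "real \<times> real"
    and th12 th13 :: real
    and s :: complex
    and D1 D2 D3 :: "nat \<Rightarrow> real \<Rightarrow> complex \<times> complex"
  assumes d1_unit: "norm d1 = 1"
    and d2_def: "d2 = rot (- th12) d1"
    and d3_def: "d3 = rot th13 d1"
    and th12: "0 < th12" "th12 < pi"
    and th13: "0 < th13" "th13 < pi"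
    and th_sum: "th12 + th13 \<ge> pi"
    and s_pos: "Re s > 0"
    and smooth1: "higher_derivs_on D1 {0..}"
    and smooth2: "higher_derivs_on D2 {0..}"
    and smooth3: "higher_derivs_on D3 {0..}"
    and bdd1: "bounded (D1 0 ` {0..})"
    and bdd2: "bounded (D2 0 ` {0..})"
    and bdd3: "bounded (D3 0 ` {0..})"
    and eq1a: "\<And>t. t > 0 \<Longrightarrow>
        s * cdot (D1 0 t) (cvec (perp d1)) = cdot (D1 2 t) (cvec (perp d1))"
    and eq1b: "\<And>t. t > 0 \<Longrightarrow> cdot (cvec d1) (D1 2 t) = 0"
    and eq2a: "\<And>t. t > 0 \<Longrightarrow>
        s * cdot (D2 0 t) (cvec (perp d2)) = - cdot (D2 4 t) (cvec (perp d2))"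
    and eq2b: "\<And>t. t > 0 \<Longrightarrow> cdot (cvec d2) (D2 2 t) = 0"
    and eq3a: "\<And>t. t > 0 \<Longrightarrow>
        s * cdot (D3 0 t) (cvec (perp d3)) = - cdot (D3 4 t) (cvec (perp d3))"
    and eq3b: "\<And>t. t > 0 \<Longrightarrow> cdot (cvec d3) (D3 2 t) = 0"
    and bc_i: "D1 0 0 = D2 0 0" "D2 0 0 = D3 0 0"
    and bc_ii2: "cdot (cvec d1) (D2 1 0) + cdot (cvec d2) (D1 1 0)
        - cdot (cvec d1) (cvec d2) * (cdot (cvec d1) (D1 1 0) + cdot (cvec d2) (D2 1 0)) = 0"
    and bc_ii3: "cdot (cvec d1) (D3 1 0) + cdot (cvec d3) (D1 1 0)
        - cdot (cvec d1) (cvec d3) * (cdot (cvec d1) (D1 1 0) + cdot (cvec d3) (D3 1 0)) = 0"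
    and bc_iii: "cdot (D2 2 0) (cvec (perp d2)) = - cdot (D3 2 0) (cvec (perp d3))"
    and bc_iv: "cdot (D2 3 0) (cvec (perp d2)) = cdot (D3 3 0) (cvec (perp d3))"
  shows "\<forall>t\<ge>0. D1 0 t = 0 \<and> D2 0 t = 0 \<and> D3 0 t = 0"
proof -
  obtain a c :: complex
    where ac: "Re a > 0" "Re c > 0" "Re (a * c) > 0" "a\<^sup>2 + c\<^sup>2 = 0" "(a * c)\<^sup>2 = s"
    using exists_right_half_plane_fourth_roots[OF s_pos] by blast
  have "d1 \<noteq> 0" "d2 \<noteq> 0" "d3 \<noteq> 0" using d1_unit by (auto simp: d2_def d3_def rot_eq_0_iff)
  note B1 = grain_boundary_branch[OF smooth1 bdd1 \<open>d1 \<noteq> 0\<close> ac(3,5) eq1a eq1b]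
  note B2 = surface_branch[OF smooth2 bdd2 \<open>d2 \<noteq> 0\<close> ac(1,2,4,5) eq2a eq2b]
  note B3 = surface_branch[OF smooth3 bdd3 \<open>d3 \<noteq> 0\<close> ac(1,2,4,5) eq3a eq3b]
  define P Q where "P = cdot (D1 0 0) (cvec d1)" and "Q = cdot (D1 0 0) (cvec (perp d1))"
  define n2 n3 where "n2 k = cdot (D2 k 0) (cvec (perp d2))" and "n3 k = cdot (D3 k 0) (cvec (perp d3))"
    for k
  have "sin (- th12) \<noteq> 0" "sin th13 \<noteq> 0" using sin_gt_zero[OF th12] sin_gt_zero[OF th13] by simp_all
  have "n2 1 = cdot (D1 1 0) (cvec (perp d1))"
    using \<open>sin (- th12) \<noteq> 0\<close> B1(1) B2(1) bc_ii2 unfolding n2_def d2_def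
    by (rule young_condition_normal_slopes_eq)
  moreover have "n3 1 = cdot (D1 1 0) (cvec (perp d1))"
    using \<open>sin th13 \<noteq> 0\<close> B1(1) B3(1) bc_ii3 unfolding n3_def d3_def
    by (rule young_condition_normal_slopes_eq)
  ultimately have slopes: "n2 1 = - (a * c) * Q" "n3 1 = - (a * c) * Q"
    using B1(2) by (simp_all add: Q_def)
  have "a + c \<noteq> 0" "a * c \<noteq> 0" using ac(1-3) Re_pos_add_neq_0 by auto
  then have "n2 0 = (a + c) * Q \<and> n3 0 = (a + c) * Q"
    using slopes B2(2) B3(2) B2(3) B3(3) bc_iii bc_iv unfolding n2_def n3_def
    by (rule surface_normals_at_junction)
  then have "of_real (cos th12) * Q + of_real (sin th12) * P = (a + c) * Q"
      "of_real (cos th13) * Q - of_real (sin th13) * P = (a + c) * Q"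
    using bc_i by (simp_all add: n2_def n3_def d2_def d3_def cdot_perp_rot_right P_def Q_def)
  moreover have "Re (a + c) > 0" using ac(1,2) by simp
  ultimately have "P = 0" "Q = 0" using junction_normal_system_trivial[OF th12 th13 th_sum] by blast+
  then have "D1 0 0 = 0" using \<open>d1 \<noteq> 0\<close> eq_0_if_cdot_tangent_normal_eq_0 by (simp add: P_def Q_def)
  then show ?thesis using B1(3) B2(4) B3(4) bc_i slopes \<open>Q = 0\<close> by (simp add: n2_def n3_def)
qed

end
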